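(* For every integer $n\geq 1$ and every admissible matrix $\Theta$, the $K_0$ group of the noncommutative $\mathbb{R}^{2n}$ satisfies $K_0(A(\mathbb{R}^{2n}_\Theta))\cong\mathbb{Z}$.
   Context: Let $\Theta=(\theta_{pq})_{1\leq p,q\leq 2n}$ be a real skew-symmetric matrix with $\theta_{2m-1,2m}=-\theta_{2m,2m-1}>0$ for $m=1,\dots,n$ and all other entries $0$. The noncommutative $\mathbb{R}^{2n}$, $A(\mathbb{R}^{2n}_\Theta)$, is the unital $*$-algebra generated by $2n$ self-adjoint elements $x_1,\dots,x_{2n}$ subject to $[x_p,x_q]=x_px_q-x_qx_p=-i\theta_{pq}$ for all $p,q$ (so $[x_{2m-1},x_{2m}]=-i\theta_{2m-1,2m}$ and all other pairs commute); every element is a finite sum $\sum a_{p_1,\dots,p_{2n}}x_1^{p_1}\cdots x_{2n}^{p_{2n}}$ with complex coefficients (these ordered monomials being linearly independent), $x_j^0=1$. A projector over a $*$-algebra $A$ is a square matrix $p$ with entries in $A$ satisfying $p^2=p=p^*$. Projectors $p,q$ are equivalent if for some $N$ there is a unitary $u\in M_N(A)$ with $\mathrm{diag}(p,0)=u\,\mathrm{diag}(q,0)\,u^*$. Equivalence classes form a semigroup under $p+q:=\mathrm{diag}(p,q)$, and $K_0(A)$ is its Grothendieck group. *)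

theory Defs
  imports Complex_Main "HOL-Algebra.Elementary_Groups"
begin

text \<open>Generators are x_1,...,x_{2n} (1-based, as in the paper).  An exponent vector
  alpha :: nat => nat (alpha p = exponent of x_p) stands for the ordered monomial
  x_1^{alpha 1} ... x_{2n}^{alpha 2n}.  An element of the algebra is its (finitely
  supported) coefficient function on exponent vectors supported in {1..2n}.\<close>

type_synonym nc_elem = "(nat \<Rightarrow> nat) \<Rightarrow> complex"
type_synonym nc_mat = "nat \<Rightarrow> nat \<Rightarrow> nc_elem"

definition admissible :: "nat \<Rightarrow> (nat \<Rightarrow> nat \<Rightarrow> real) \<Rightarrow> bool" where
  "admissible n \<Theta> \<longleftrightarrow>
     (\<forall>p\<in>{1..2*n}. \<forall>q\<in>{1..2*n}. \<Theta> p q = - \<Theta> q p) \<and>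
     (\<forall>m\<in>{1..n}. \<Theta> (2*m-1) (2*m) > 0) \<and>
     (\<forall>p\<in>{1..2*n}. \<forall>q\<in>{1..2*n}.
        \<not> (\<exists>m\<in>{1..n}. (p = 2*m-1 \<and> q = 2*m) \<or> (p = 2*m \<and> q = 2*m-1)) \<longrightarrow> \<Theta> p q = 0)"

definition nc_carrier :: "nat \<Rightarrow> nc_elem set" where
  "nc_carrier n = {f. finite {\<alpha>. f \<alpha> \<noteq> 0} \<and>
      (\<forall>\<alpha>. f \<alpha> \<noteq> 0 \<longrightarrow> (\<forall>p. \<alpha> p \<noteq> 0 \<longrightarrow> p \<in> {1..2*n}))}"

definition nc_zero :: nc_elem where "nc_zero = (\<lambda>_. 0)"

definition nc_one :: nc_elem where "nc_one = (\<lambda>\<gamma>. if \<gamma> = (\<lambda>_. 0) then 1 else 0)"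

definition nc_add :: "nc_elem \<Rightarrow> nc_elem \<Rightarrow> nc_elem" where
  "nc_add f g = (\<lambda>\<gamma>. f \<gamma> + g \<gamma>)"

text \<open>Distinct pairs (x_{2m-1}, x_{2m}) commute, and within a pair, writing X = x_{2m-1},
  Y = x_{2m}, theta = Theta(2m-1,2m), one has [Y,X] = i theta (central), hence
  (X^a Y^b)(X^c Y^d) = sum_k k! C(b,k) C(c,k) (i theta)^k X^(a+c-k) Y^(b+d-k).\<close>

definition mono_mult :: "nat \<Rightarrow> (nat \<Rightarrow> nat \<Rightarrow> real) \<Rightarrow> (nat \<Rightarrow> nat) \<Rightarrow> (nat \<Rightarrow> nat) \<Rightarrow> nc_elem" where
  "mono_mult n \<Theta> \<alpha> \<beta> = (\<lambda>\<gamma>.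
     \<Sum>k\<in>{k. \<forall>m. k m \<le> (if m \<in> {1..n} then min (\<alpha> (2*m)) (\<beta> (2*m-1)) else 0)}.
        (if \<gamma> = (\<lambda>p. \<alpha> p + \<beta> p - k ((p+1) div 2)) then
           (\<Prod>m\<in>{1..n}. of_nat (fact (k m) * (\<alpha> (2*m) choose k m) * (\<beta> (2*m-1) choose k m))
                           * (\<i> * complex_of_real (\<Theta> (2*m-1) (2*m))) ^ k m)
         else 0))"

definition nc_mult :: "nat \<Rightarrow> (nat \<Rightarrow> nat \<Rightarrow> real) \<Rightarrow> nc_elem \<Rightarrow> nc_elem \<Rightarrow> nc_elem" where
  "nc_mult n \<Theta> f g = (\<lambda>\<gamma>. \<Sum>\<alpha>\<in>{\<alpha>. f \<alpha> \<noteq> 0}. \<Sum>\<beta>\<in>{\<beta>. g \<beta> \<noteq> 0}.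
       f \<alpha> * g \<beta> * mono_mult n \<Theta> \<alpha> \<beta> \<gamma>)"

text \<open>Involution: the x_p are self-adjoint, so (x^alpha)^* is the reversed product
  x_{2n}^{alpha 2n} ... x_1^{alpha 1}, which (pairs commuting) equals
  x^{even part of alpha} * x^{odd part of alpha}; coefficients are conjugated.\<close>

definition nc_star :: "nat \<Rightarrow> (nat \<Rightarrow> nat \<Rightarrow> real) \<Rightarrow> nc_elem \<Rightarrow> nc_elem" where
  "nc_star n \<Theta> f = (\<lambda>\<gamma>. \<Sum>\<alpha>\<in>{\<alpha>. f \<alpha> \<noteq> 0}.
       cnj (f \<alpha>) * mono_mult n \<Theta> (\<lambda>p. if even p then \<alpha> p else 0)
                                   (\<lambda>p. if odd p then \<alpha> p else 0) \<gamma>)"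

text \<open>A K x K matrix is a function nat => nat => element, with entries in the algebra
  for indices below K and zero elsewhere (so diag(p,0) is p itself, viewed at a larger size).\<close>

definition is_mat :: "nat \<Rightarrow> nat \<Rightarrow> nc_mat \<Rightarrow> bool" where
  "is_mat n K P \<longleftrightarrow> (\<forall>i j. (i < K \<and> j < K \<longrightarrow> P i j \<in> nc_carrier n) \<and>
                            (\<not> (i < K \<and> j < K) \<longrightarrow> P i j = nc_zero))"

definition mat_mult :: "nat \<Rightarrow> (nat \<Rightarrow> nat \<Rightarrow> real) \<Rightarrow> nat \<Rightarrow> nc_mat \<Rightarrow> nc_mat \<Rightarrow> nc_mat" where
  "mat_mult n \<Theta> K P Q = (\<lambda>i j \<gamma>. \<Sum>l<K. nc_mult n \<Theta> (P i l) (Q l j) \<gamma>)"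

definition mat_star :: "nat \<Rightarrow> (nat \<Rightarrow> nat \<Rightarrow> real) \<Rightarrow> nc_mat \<Rightarrow> nc_mat" where
  "mat_star n \<Theta> P = (\<lambda>i j. nc_star n \<Theta> (P j i))"

definition mat_id :: "nat \<Rightarrow> nc_mat" where
  "mat_id K = (\<lambda>i j. if i = j \<and> i < K then nc_one else nc_zero)"

definition is_unitary :: "nat \<Rightarrow> (nat \<Rightarrow> nat \<Rightarrow> real) \<Rightarrow> nat \<Rightarrow> nc_mat \<Rightarrow> bool" where
  "is_unitary n \<Theta> K U \<longleftrightarrow> is_mat n K U \<and>
     mat_mult n \<Theta> K U (mat_star n \<Theta> U) = mat_id K \<and>
     mat_mult n \<Theta> K (mat_star n \<Theta> U) U = mat_id K"

definition projectors :: "nat \<Rightarrow> (nat \<Rightarrow> nat \<Rightarrow> real) \<Rightarrow> (nat \<times> nc_mat) set" where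
  "projectors n \<Theta> = {(N, P). is_mat n N P \<and> mat_mult n \<Theta> N P P = P \<and> mat_star n \<Theta> P = P}"

definition proj_equiv :: "nat \<Rightarrow> (nat \<Rightarrow> nat \<Rightarrow> real) \<Rightarrow> nat \<times> nc_mat \<Rightarrow> nat \<times> nc_mat \<Rightarrow> bool" where
  "proj_equiv n \<Theta> p q \<longleftrightarrow> (\<exists>K U. fst p \<le> K \<and> fst q \<le> K \<and> is_unitary n \<Theta> K U \<and>
       snd p = mat_mult n \<Theta> K (mat_mult n \<Theta> K U (snd q)) (mat_star n \<Theta> U))"

definition proj_sum :: "nat \<times> nc_mat \<Rightarrow> nat \<times> nc_mat \<Rightarrow> nat \<times> nc_mat" where
  "proj_sum p q = (fst p + fst q, (\<lambda>i j.
      if i < fst p \<and> j < fst p then snd p i j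
      else if fst p \<le> i \<and> i < fst p + fst q \<and> fst p \<le> j \<and> j < fst p + fst q
        then snd q (i - fst p) (j - fst p)
      else nc_zero))"

definition proj_zero :: "nat \<times> nc_mat" where
  "proj_zero = (0, \<lambda>_ _. nc_zero)"

text \<open>Formal differences [a] - [b] of classes of projectors; [a]-[b] = [c]-[d] iff
  [a]+[d]+[e] = [c]+[b]+[e] for some class [e].\<close>

definition K0_rel :: "nat \<Rightarrow> (nat \<Rightarrow> nat \<Rightarrow> real) \<Rightarrow>
    ((nat \<times> nc_mat) \<times> (nat \<times> nc_mat)) rel" where
  "K0_rel n \<Theta> = {((a, b), (c, d)).
      a \<in> projectors n \<Theta> \<and> b \<in> projectors n \<Theta> \<and> c \<in> projectors n \<Theta> \<and> d \<in> projectors n \<Theta> \<and>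
      (\<exists>e\<in>projectors n \<Theta>.
         proj_equiv n \<Theta> (proj_sum (proj_sum a d) e) (proj_sum (proj_sum c b) e))}"

definition K0 :: "nat \<Rightarrow> (nat \<Rightarrow> nat \<Rightarrow> real) \<Rightarrow>
    ((nat \<times> nc_mat) \<times> (nat \<times> nc_mat)) set monoid" where
  "K0 n \<Theta> = \<lparr>carrier = (projectors n \<Theta> \<times> projectors n \<Theta>) // K0_rel n \<Theta>,
     monoid.mult = (\<lambda>X Y. K0_rel n \<Theta> `` {(proj_sum a c, proj_sum b d) | a b c d.
                                             (a, b) \<in> X \<and> (c, d) \<in> Y}),
     one = K0_rel n \<Theta> `` {(proj_zero, proj_zero)}\<rparr>"

end

theory Submission
  imports Defs "HOL-Library.Fun_Lexorder"
begin

(* Order exponent vectors lexicographically.  Whatever Theta is, the product x^alpha x^beta of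
   ordered monomials only contains monomials x^gamma with gamma <= alpha + beta pointwise, and
   x^(alpha + beta) with coefficient 1.  Hence if L is the largest exponent occurring in a matrix M
   over A and L is not 0, the monomial x^(2L) does not occur in M, but it occurs in a diagonal
   entry (M^* M)_ii with the coefficient sum_l |M_li(L)|^2, which is not 0.  Since p^* p = p for
   a projector and u^* u = 1 for a unitary, both are scalar matrices, so K_0(A) is K_0 of the
   complex numbers: a complex projection is unitarily equivalent to diag(1,...,1,0,...,0)
   (by Householder reflections), hence classified by its trace, which is additive on direct sums,
   and [p] - [q] |-> tr p - tr q is an isomorphism onto the integers. *)

lemma sum_eq_single:
  assumes "finite A" and "\<And>x. x \<in> A \<Longrightarrow> x \<noteq> a \<Longrightarrow> g x = 0"
  shows "sum g A = (if a \<in> A then g a else 0)"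
proof -
  have "sum g A = (\<Sum>x\<in>A. if x = a then g a else 0)"
    using assms(2) by (intro sum.cong) auto
  then show ?thesis
    using assms(1) by simp
qed

lemma sum_lessThan_add: "(\<Sum>l<N + M. f l) = (\<Sum>l<N. f l) + (\<Sum>l<M. f (N + l :: nat))"
  by (induction M) (simp_all add: add.assoc)

lemma cnj_mult_self: "cnj z * z = of_real ((cmod z)\<^sup>2)"
  by (subst complex_norm_square) (rule mult.commute)

lemma sum_cnj_mult_self_eq_0_iff:
  fixes z :: "'a \<Rightarrow> complex"
  assumes "finite A"
  shows "(\<Sum>l\<in>A. cnj (z l) * z l) = 0 \<longleftrightarrow> (\<forall>l\<in>A. z l = 0)"
proof -
  have "(\<Sum>l\<in>A. cnj (z l) * z l) = of_real (\<Sum>l\<in>A. (cmod (z l))\<^sup>2)"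
    by (simp only: cnj_mult_self of_real_sum)
  then show ?thesis
    using assms by (simp only: of_real_eq_0_iff sum_nonneg_eq_0_iff zero_le_power2) simp
qed

section \<open>Complex matrices\<close>

type_synonym cmat = "nat \<Rightarrow> nat \<Rightarrow> complex"

definition cmat_carrier :: "nat \<Rightarrow> cmat set" where
  "cmat_carrier K = {A. \<forall>i j. \<not> (i < K \<and> j < K) \<longrightarrow> A i j = 0}"

definition cmat_mult :: "nat \<Rightarrow> cmat \<Rightarrow> cmat \<Rightarrow> cmat" where
  "cmat_mult K A B = (\<lambda>i j. \<Sum>l<K. A i l * B l j)"

definition cmat_adj :: "cmat \<Rightarrow> cmat" where
  "cmat_adj A = (\<lambda>i j. cnj (A j i))"

definition cmat_id :: "nat \<Rightarrow> cmat" where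
  "cmat_id r = (\<lambda>i j. if i = j \<and> i < r then 1 else 0)"

definition cmat_conj :: "nat \<Rightarrow> cmat \<Rightarrow> cmat \<Rightarrow> cmat" where
  "cmat_conj K U A = cmat_mult K (cmat_mult K U A) (cmat_adj U)"

definition cmat_trace :: "nat \<Rightarrow> cmat \<Rightarrow> complex" where
  "cmat_trace K A = (\<Sum>i<K. A i i)"

definition cmat_proj :: "nat \<Rightarrow> cmat \<Rightarrow> bool" where
  "cmat_proj K P \<longleftrightarrow> P \<in> cmat_carrier K \<and> cmat_mult K P P = P \<and> cmat_adj P = P"

definition cmat_unitary :: "nat \<Rightarrow> cmat \<Rightarrow> bool" where
  "cmat_unitary K U \<longleftrightarrow> U \<in> cmat_carrier K \<and>
     cmat_mult K U (cmat_adj U) = cmat_id K \<and> cmat_mult K (cmat_adj U) U = cmat_id K"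

lemma cmat_carrierD: "A \<in> cmat_carrier K \<Longrightarrow> \<not> (i < K \<and> j < K) \<Longrightarrow> A i j = 0"
  by (simp add: cmat_carrier_def)

lemma cmat_carrier_mono: "N \<le> K \<Longrightarrow> cmat_carrier N \<subseteq> cmat_carrier K"
  by (auto simp: cmat_carrier_def)

lemma cmat_id_carrier: "r \<le> K \<Longrightarrow> cmat_id r \<in> cmat_carrier K"
  by (simp add: cmat_carrier_def cmat_id_def)

lemma cmat_mult_carrier: "A \<in> cmat_carrier K \<Longrightarrow> B \<in> cmat_carrier K \<Longrightarrow> cmat_mult K A B \<in> cmat_carrier K"
  unfolding cmat_carrier_def cmat_mult_def by (auto intro!: sum.neutral)

lemma cmat_adj_carrier: "A \<in> cmat_carrier K \<Longrightarrow> cmat_adj A \<in> cmat_carrier K"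
  by (auto simp: cmat_carrier_def cmat_adj_def)

lemma cmat_mult_assoc: "cmat_mult K (cmat_mult K A B) C = cmat_mult K A (cmat_mult K B C)"
proof (intro ext)
  fix i j
  have "cmat_mult K (cmat_mult K A B) C i j = (\<Sum>l<K. \<Sum>m<K. A i m * B m l * C l j)"
    unfolding cmat_mult_def by (simp add: sum_distrib_right)
  also have "\<dots> = (\<Sum>m<K. \<Sum>l<K. A i m * B m l * C l j)"
    by (rule sum.swap)
  also have "\<dots> = cmat_mult K A (cmat_mult K B C) i j"
    unfolding cmat_mult_def by (simp add: sum_distrib_left mult.assoc)
  finally show "cmat_mult K (cmat_mult K A B) C i j = cmat_mult K A (cmat_mult K B C) i j" .
qed

lemma cmat_adj_mult: "cmat_adj (cmat_mult K A B) = cmat_mult K (cmat_adj B) (cmat_adj A)"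
  by (simp add: cmat_adj_def cmat_mult_def mult.commute)

lemma cmat_adj_adj [simp]: "cmat_adj (cmat_adj A) = A"
  by (simp add: cmat_adj_def)

lemma cmat_adj_id [simp]: "cmat_adj (cmat_id r) = cmat_id r"
  by (auto simp: cmat_adj_def cmat_id_def fun_eq_iff)

lemma sum_cmat_id_left: "(\<Sum>l<K. cmat_id K i l * f l) = (if i < K then f i else 0)"
  unfolding cmat_id_def by (simp add: if_distrib[of "\<lambda>x. x * _"] sum.delta cong: if_cong)

lemma sum_cmat_id_right: "(\<Sum>l<K. f l * cmat_id K l j) = (if j < K then f j else 0)"
  unfolding cmat_id_def by (simp add: if_distrib[of "\<lambda>x. _ * x"] sum.delta' cong: if_cong)

lemma cmat_mult_id_left: "A \<in> cmat_carrier K \<Longrightarrow> cmat_mult K (cmat_id K) A = A"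
  unfolding cmat_mult_def sum_cmat_id_left by (auto simp: fun_eq_iff dest: cmat_carrierD)

lemma cmat_mult_id_right: "A \<in> cmat_carrier K \<Longrightarrow> cmat_mult K A (cmat_id K) = A"
  unfolding cmat_mult_def sum_cmat_id_right by (auto simp: fun_eq_iff dest: cmat_carrierD)

lemma cmat_mult_shrink:
  assumes "A \<in> cmat_carrier N \<or> B \<in> cmat_carrier N" and "N \<le> K"
  shows "cmat_mult K A B = cmat_mult N A B"
  unfolding cmat_mult_def
  by (intro ext sum.mono_neutral_right) (use assms in \<open>auto simp: cmat_carrier_def\<close>)

lemma cmat_trace_mult_commute: "cmat_trace K (cmat_mult K A B) = cmat_trace K (cmat_mult K B A)"
  unfolding cmat_trace_def cmat_mult_def by (subst sum.swap) (simp add: mult.commute)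

lemma cmat_trace_shrink: "A \<in> cmat_carrier N \<Longrightarrow> N \<le> K \<Longrightarrow> cmat_trace K A = cmat_trace N A"
  unfolding cmat_trace_def by (rule sum.mono_neutral_right) (auto simp: cmat_carrier_def)

lemma cmat_trace_id: "cmat_trace r (cmat_id r) = of_nat r"
  by (simp add: cmat_trace_def cmat_id_def)

lemma cmat_trace_id_le: "r \<le> K \<Longrightarrow> cmat_trace K (cmat_id r) = of_nat r"
  by (simp add: cmat_trace_shrink[OF cmat_id_carrier[OF order_refl]] cmat_trace_id)

lemma cmat_proj_id: "cmat_proj r (cmat_id r)"
  by (simp add: cmat_proj_def cmat_id_carrier cmat_mult_id_left)

lemma cmat_proj_mono:
  assumes "cmat_proj N P" and "N \<le> K"
  shows "cmat_proj K P"
proof -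
  have "P \<in> cmat_carrier N"
    using assms(1) by (simp add: cmat_proj_def)
  then have "cmat_mult K P P = cmat_mult N P P"
    using assms(2) by (intro cmat_mult_shrink) simp_all
  then show ?thesis
    using assms cmat_carrier_mono by (auto simp: cmat_proj_def)
qed

lemma cmat_proj_shrink:
  assumes "cmat_proj K P" and "P \<in> cmat_carrier N" and "N \<le> K"
  shows "cmat_proj N P"
  using assms cmat_mult_shrink[where A = P and B = P and N = N and K = K]
  by (simp add: cmat_proj_def)

lemma cmat_unitary_id: "cmat_unitary K (cmat_id K)"
  by (simp add: cmat_unitary_def cmat_id_carrier cmat_mult_id_left)

lemma cmat_unitary_adj: "cmat_unitary K U \<Longrightarrow> cmat_unitary K (cmat_adj U)"
  by (simp add: cmat_unitary_def cmat_adj_carrier)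

lemma cmat_unitary_mult:
  assumes U: "cmat_unitary K U" and V: "cmat_unitary K V"
  shows "cmat_unitary K (cmat_mult K U V)"
proof -
  have "cmat_mult K (cmat_mult K U V) (cmat_adj (cmat_mult K U V)) =
      cmat_mult K U (cmat_mult K (cmat_mult K V (cmat_adj V)) (cmat_adj U))"
    and "cmat_mult K (cmat_adj (cmat_mult K U V)) (cmat_mult K U V) =
      cmat_mult K (cmat_adj V) (cmat_mult K (cmat_mult K (cmat_adj U) U) V)"
    by (simp_all add: cmat_adj_mult cmat_mult_assoc)
  with U V show ?thesis
    unfolding cmat_unitary_def
    by (simp add: cmat_mult_carrier cmat_adj_carrier cmat_mult_id_left)
qed

lemma cmat_unitary_cancel_left:
  assumes "cmat_unitary K U" and "X \<in> cmat_carrier K"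
  shows "cmat_mult K (cmat_adj U) (cmat_mult K U X) = X"
  using assms by (simp add: cmat_unitary_def cmat_mult_assoc[symmetric] cmat_mult_id_left)

lemma cmat_conj_conj: "cmat_conj K U (cmat_conj K V A) = cmat_conj K (cmat_mult K U V) A"
  by (simp add: cmat_conj_def cmat_adj_mult cmat_mult_assoc)

lemma cmat_conj_adj_conj:
  assumes "cmat_unitary K U" and "A \<in> cmat_carrier K"
  shows "cmat_conj K (cmat_adj U) (cmat_conj K U A) = A"
proof -
  have "cmat_mult K (cmat_adj U) U = cmat_id K"
    using assms(1) by (simp add: cmat_unitary_def)
  then show ?thesis
    using assms unfolding cmat_conj_def
    by (simp add: cmat_mult_assoc cmat_mult_id_right cmat_unitary_cancel_left)
qed

lemma cmat_trace_conj:
  assumes "cmat_unitary K U" and "A \<in> cmat_carrier K"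
  shows "cmat_trace K (cmat_conj K U A) = cmat_trace K A"
  using assms unfolding cmat_conj_def
  by (simp add: cmat_trace_mult_commute[of K "cmat_mult K U A"] cmat_unitary_cancel_left)

lemma cmat_proj_conj:
  assumes U: "cmat_unitary K U" and P: "cmat_proj K P"
  shows "cmat_proj K (cmat_conj K U P)"
proof -
  have "cmat_mult K (cmat_conj K U P) (cmat_conj K U P) =
      cmat_mult K U (cmat_mult K P (cmat_mult K (cmat_mult K (cmat_adj U) U) (cmat_mult K P (cmat_adj U))))"
    by (simp add: cmat_conj_def cmat_mult_assoc)
  also have "\<dots> = cmat_conj K U P"
    using U P by (simp add: cmat_unitary_def cmat_proj_def cmat_conj_def cmat_mult_id_left
        cmat_mult_carrier cmat_adj_carrier cmat_mult_assoc[symmetric])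
  finally show ?thesis
    using U P by (simp add: cmat_proj_def cmat_conj_def cmat_adj_mult cmat_mult_assoc
        cmat_mult_carrier cmat_adj_carrier cmat_unitary_def)
qed

definition block_diag :: "nat \<Rightarrow> nat \<Rightarrow> cmat \<Rightarrow> cmat \<Rightarrow> cmat" where
  "block_diag N M A B = (\<lambda>i j.
      if i < N \<and> j < N then A i j
      else if N \<le> i \<and> i < N + M \<and> N \<le> j \<and> j < N + M then B (i - N) (j - N)
      else 0)"

lemma block_diag_carrier: "block_diag N M A B \<in> cmat_carrier (N + M)"
  by (simp add: cmat_carrier_def block_diag_def)

lemma block_diag_adj: "cmat_adj (block_diag N M A B) = block_diag N M (cmat_adj A) (cmat_adj B)"
  by (auto simp: cmat_adj_def block_diag_def fun_eq_iff)

lemma block_diag_mult: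
  "cmat_mult (N + M) (block_diag N M A B) (block_diag N M C D) =
     block_diag N M (cmat_mult N A C) (cmat_mult M B D)"
proof (intro ext)
  fix i j
  let ?X = "block_diag N M A B" and ?Y = "block_diag N M C D"
  have "cmat_mult (N + M) ?X ?Y i j = (\<Sum>l<N. ?X i l * ?Y l j) + (\<Sum>l<M. ?X i (N + l) * ?Y (N + l) j)"
    unfolding cmat_mult_def by (rule sum_lessThan_add)
  also have "\<dots> = block_diag N M (cmat_mult N A C) (cmat_mult M B D) i j"
    by (auto simp: block_diag_def cmat_mult_def cong: sum.cong_simp)
  finally show "cmat_mult (N + M) ?X ?Y i j = block_diag N M (cmat_mult N A C) (cmat_mult M B D) i j" .
qed

lemma block_diag_id: "block_diag N M (cmat_id N) (cmat_id M) = cmat_id (N + M)"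
  by (auto simp: block_diag_def cmat_id_def fun_eq_iff)

lemma block_diag_trace: "cmat_trace (N + M) (block_diag N M A B) = cmat_trace N A + cmat_trace M B"
  unfolding cmat_trace_def sum_lessThan_add by (simp add: block_diag_def)

lemma block_diag_zero: "A \<in> cmat_carrier N \<Longrightarrow> block_diag N M A (\<lambda>_ _. 0) = A"
  by (auto simp: block_diag_def fun_eq_iff dest: cmat_carrierD)

lemma block_diag_conj:
  "cmat_conj (N + M) (block_diag N M U V) (block_diag N M A B) =
     block_diag N M (cmat_conj N U A) (cmat_conj M V B)"
  by (simp add: cmat_conj_def block_diag_mult block_diag_adj)

lemma cmat_proj_block_diag:
  assumes "cmat_proj N A" and "cmat_proj M B"
  shows "cmat_proj (N + M) (block_diag N M A B)"
  using assms by (simp add: cmat_proj_def block_diag_carrier block_diag_mult block_diag_adj)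

lemma cmat_unitary_block_diag:
  assumes "cmat_unitary N U" and "cmat_unitary M V"
  shows "cmat_unitary (N + M) (block_diag N M U V)"
  using assms
  by (simp add: cmat_unitary_def block_diag_carrier block_diag_mult block_diag_adj block_diag_id)

definition cmat_vec_mult :: "nat \<Rightarrow> cmat \<Rightarrow> (nat \<Rightarrow> complex) \<Rightarrow> nat \<Rightarrow> complex" where
  "cmat_vec_mult K A x = (\<lambda>i. \<Sum>l<K. A i l * x l)"

definition cinner :: "nat \<Rightarrow> (nat \<Rightarrow> complex) \<Rightarrow> (nat \<Rightarrow> complex) \<Rightarrow> complex" where
  "cinner K x y = (\<Sum>i<K. cnj (x i) * y i)"

lemma cmat_vec_mult_mult:
  "cmat_vec_mult K (cmat_mult K A B) x = cmat_vec_mult K A (cmat_vec_mult K B x)"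
proof (rule ext)
  fix i
  have "cmat_vec_mult K (cmat_mult K A B) x i = (\<Sum>l<K. \<Sum>m<K. A i m * B m l * x l)"
    unfolding cmat_vec_mult_def cmat_mult_def by (simp add: sum_distrib_right)
  also have "\<dots> = (\<Sum>m<K. \<Sum>l<K. A i m * B m l * x l)"
    by (rule sum.swap)
  also have "\<dots> = cmat_vec_mult K A (cmat_vec_mult K B x) i"
    unfolding cmat_vec_mult_def by (simp add: sum_distrib_left mult.assoc)
  finally show "cmat_vec_mult K (cmat_mult K A B) x i = cmat_vec_mult K A (cmat_vec_mult K B x) i" .
qed

lemma cinner_self_eq_0_iff: "cinner K x x = 0 \<longleftrightarrow> (\<forall>i<K. x i = 0)"
  unfolding cinner_def by (auto simp: sum_cnj_mult_self_eq_0_iff)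

lemma cmat_proj_kernel_vector:
  assumes P: "cmat_proj K P" and "P \<noteq> cmat_id K"
  obtains x a where "\<forall>i\<ge>K. x i = 0" and "a < K" and "x a \<noteq> 0"
    and "cmat_vec_mult K P x = (\<lambda>_. 0)"
proof -
  have carrier: "P \<in> cmat_carrier K" and idem: "cmat_mult K P P = P"
    using P by (auto simp: cmat_proj_def)
  obtain a j where aj: "P a j \<noteq> cmat_id K a j"
    using \<open>P \<noteq> cmat_id K\<close> by (meson ext)
  then have "a < K" and "j < K"
    using carrier cmat_id_carrier[of K K] by (metis cmat_carrierD order_refl)+
  define x where "x = (\<lambda>l. cmat_id K l j - P l j)"
  have "\<forall>i\<ge>K. x i = 0"
    using carrier by (simp add: x_def cmat_id_def cmat_carrierD)
  moreover have "x a \<noteq> 0"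
    using aj by (simp add: x_def)
  moreover have "cmat_vec_mult K P x = (\<lambda>_. 0)"
  proof (rule ext)
    fix m
    have "cmat_vec_mult K P x m = (\<Sum>l<K. P m l * cmat_id K l j) - cmat_mult K P P m j"
      unfolding cmat_vec_mult_def cmat_mult_def x_def by (simp add: right_diff_distrib sum_subtractf)
    also have "\<dots> = 0"
      using idem \<open>j < K\<close> by (simp add: sum_cmat_id_right)
    finally show "cmat_vec_mult K P x m = 0" .
  qed
  ultimately show ?thesis
    using that \<open>a < K\<close> by blast
qed

lemma unit_rescale_real_at:
  assumes "a < K" and "x a \<noteq> 0"
  obtains c where "cinner K (\<lambda>i. c * x i) (\<lambda>i. c * x i) = 1" and "cnj (c * x m) = c * x m"
proof -
  define s where "s = (\<Sum>i<K. (cmod (x i))\<^sup>2)"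
  have "0 < s"
    unfolding s_def using assms by (intro sum_pos2[of _ a]) auto
  have inner: "cinner K x x = of_real s"
    unfolding cinner_def s_def by (simp add: cnj_mult_self)
  define ph where "ph = (if x m = 0 then 1 else cnj (x m) / of_real (cmod (x m)))"
  have ph_unit: "cnj ph * ph = 1"
    by (auto simp: ph_def cnj_mult_self norm_divide)
  have ph_real: "ph * x m = of_real (cmod (x m))"
    by (auto simp: ph_def complex_norm_square[symmetric] power2_eq_square field_simps mult.commute)
  define c where "c = ph / of_real (sqrt s)"
  have "cinner K (\<lambda>i. c * x i) (\<lambda>i. c * x i) = cnj c * c * cinner K x x"
    unfolding cinner_def by (simp add: sum_distrib_left algebra_simps)
  also have "\<dots> = 1"
    using \<open>0 < s\<close> ph_unit unfolding inner c_def
    by (simp add: field_simps of_real_mult[symmetric] del: of_real_mult)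
  finally have "cinner K (\<lambda>i. c * x i) (\<lambda>i. c * x i) = 1" .
  moreover have "c * x m = of_real (cmod (x m) / sqrt s)"
    unfolding c_def using ph_real by (simp add: field_simps)
  then have "cnj (c * x m) = c * x m"
    by simp
  ultimately show ?thesis
    using that by blast
qed

definition reflection :: "nat \<Rightarrow> complex \<Rightarrow> (nat \<Rightarrow> complex) \<Rightarrow> cmat" where
  "reflection K c w = (\<lambda>i j. cmat_id K i j - c * (w i * cnj (w j)))"

lemma reflection_square:
  assumes w: "\<forall>i\<ge>K. w i = 0" and c: "c * c * cinner K w w = 2 * c"
  shows "cmat_mult K (reflection K c w) (reflection K c w) = cmat_id K"
proof (intro ext)
  fix i j
  have "cmat_mult K (reflection K c w) (reflection K c w) i j =
      (\<Sum>l<K. cmat_id K i l * cmat_id K l j) - (\<Sum>l<K. cmat_id K i l * (c * (w l * cnj (w j))))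
      - (\<Sum>l<K. c * (w i * cnj (w l)) * cmat_id K l j)
      + c * c * cinner K w w * (w i * cnj (w j))"
    unfolding cmat_mult_def reflection_def cinner_def
    by (simp add: algebra_simps sum_subtractf sum.distrib sum_distrib_left sum_distrib_right)
  also have "\<dots> = cmat_id K i j"
    unfolding sum_cmat_id_left sum_cmat_id_right c using w
    by (auto simp: cmat_id_def not_less)
  finally show "cmat_mult K (reflection K c w) (reflection K c w) i j = cmat_id K i j" .
qed

lemma householder_column:
  assumes v0: "\<forall>i\<ge>Suc N. v i = 0" and v1: "cinner (Suc N) v v = 1" and vN: "cnj (v N) = v N"
  obtains H where "cmat_unitary (Suc N) H" and "cmat_adj H = H" and "\<And>i. H i N = v i"
proof -
  define e where "e = (\<lambda>i. if i = N then (1::complex) else 0)"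
  define w where "w = (\<lambda>i. v i - e i)"
  define s where "s = cinner (Suc N) w w"
  (* If v = e then w = 0 and s = 0, so 2 / s = 0 and H is the identity. *)
  define H where "H = reflection (Suc N) (2 / s) w"
  have w0: "\<forall>i\<ge>Suc N. w i = 0"
    using v0 by (simp add: w_def e_def)
  have "s = cinner (Suc N) v v - cnj (v N) - v N + 1"
    unfolding s_def cinner_def w_def e_def
    by (simp add: algebra_simps sum_subtractf sum.distrib if_distrib[of "\<lambda>x. x * _"] sum.delta'
        cong: if_cong)
  then have s: "s = 2 - 2 * v N"
    using v1 vN by simp
  then have "cnj s = s"
    using vN by simp
  have "H \<in> cmat_carrier (Suc N)"
    using w0 by (auto simp: H_def reflection_def cmat_carrier_def cmat_id_def)
  moreover have adj: "cmat_adj H = H"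
    using \<open>cnj s = s\<close> by (auto simp: H_def reflection_def cmat_adj_def cmat_id_def fun_eq_iff)
  moreover have "cmat_mult (Suc N) H H = cmat_id (Suc N)"
    unfolding H_def using w0 by (rule reflection_square) (simp add: s_def[symmetric] power2_eq_square)
  ultimately have "cmat_unitary (Suc N) H"
    by (simp add: cmat_unitary_def)
  moreover have "H i N = v i" for i
  proof (cases "s = 0")
    case True
    then have "w = (\<lambda>_. 0)"
      using w0 by (auto simp: s_def cinner_self_eq_0_iff fun_eq_iff) (metis not_le)
    then have "v = e"
      by (simp add: w_def fun_eq_iff)
    then show ?thesis
      using \<open>w = (\<lambda>_. 0)\<close> by (simp add: H_def reflection_def cmat_id_def e_def)
  next
    case False
    then have "2 / s * (v N - 1) = -1"
      unfolding s by (simp add: field_simps)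
    moreover have "cnj (w N) = v N - 1"
      using vN by (simp add: w_def e_def)
    moreover have "H i N = e i - w i * (2 / s * cnj (w N))"
      by (simp add: H_def reflection_def cmat_id_def e_def mult_ac)
    ultimately show ?thesis
      by (simp add: w_def)
  qed
  ultimately show ?thesis
    using that adj by blast
qed

lemma cmat_conj_extend:
  assumes "U \<in> cmat_carrier N" and "Q \<in> cmat_carrier N"
  shows "cmat_conj (Suc N) (block_diag N 1 U (cmat_id 1)) Q = cmat_conj N U Q"
proof -
  let ?O = "\<lambda>_ _. 0 :: complex"
  have "cmat_conj (N + 1) (block_diag N 1 U (cmat_id 1)) (block_diag N 1 Q ?O) =
      block_diag N 1 (cmat_conj N U Q) (cmat_conj 1 (cmat_id 1) ?O)"
    by (rule block_diag_conj)
  moreover have "cmat_conj 1 (cmat_id 1) ?O = ?O"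
    by (simp add: cmat_conj_def cmat_mult_def)
  moreover have "cmat_conj N U Q \<in> cmat_carrier N"
    using assms by (simp add: cmat_conj_def cmat_mult_carrier cmat_adj_carrier)
  ultimately show ?thesis
    using assms(2) by (simp add: block_diag_zero)
qed

lemma cmat_proj_deflate:
  assumes P: "cmat_proj (Suc N) P" and "P \<noteq> cmat_id (Suc N)"
  obtains H where "cmat_unitary (Suc N) H" and "cmat_proj N (cmat_conj (Suc N) H P)"
proof -
  obtain x a where x0: "\<forall>i\<ge>Suc N. x i = 0" and "a < Suc N" and "x a \<noteq> 0"
    and Px: "cmat_vec_mult (Suc N) P x = (\<lambda>_. 0)"
    using cmat_proj_kernel_vector[OF assms] by blast
  from \<open>a < Suc N\<close> \<open>x a \<noteq> 0\<close> obtain c where c1: "cinner (Suc N) (\<lambda>i. c * x i) (\<lambda>i. c * x i) = 1"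
    and c2: "cnj (c * x N) = c * x N"
    by (rule unit_rescale_real_at)
  have "\<forall>i\<ge>Suc N. c * x i = 0"
    using x0 by simp
  then obtain H where H: "cmat_unitary (Suc N) H" "cmat_adj H = H" "\<And>i. H i N = c * x i"
    using c1 c2 by (rule householder_column) auto
  (* The last column of H lies in the kernel of P, so conjugation by H clears the last
     column of P, and by symmetry its last row. *)
  define Q where "Q = cmat_conj (Suc N) H P"
  have Q: "cmat_proj (Suc N) Q"
    unfolding Q_def using H(1) P by (rule cmat_proj_conj)
  have col: "Q i N = 0" for i
  proof -
    have "Q i N = (\<Sum>l<Suc N. cmat_mult (Suc N) H P i l * H l N)"
      unfolding Q_def cmat_conj_def H(2) cmat_mult_def[of "Suc N" "cmat_mult (Suc N) H P"] ..
    also have "\<dots> = c * cmat_vec_mult (Suc N) (cmat_mult (Suc N) H P) x i"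
      by (simp add: H(3) cmat_vec_mult_def sum_distrib_left mult_ac del: sum.lessThan_Suc)
    also have "\<dots> = 0"
      unfolding cmat_vec_mult_mult Px by (simp add: cmat_vec_mult_def)
    finally show ?thesis .
  qed
  have row: "Q N j = 0" for j
  proof -
    have "Q N j = cmat_adj Q N j"
      using Q by (simp add: cmat_proj_def)
    then show ?thesis
      by (simp add: cmat_adj_def col)
  qed
  have "Q \<in> cmat_carrier N"
    using Q col row by (auto simp: cmat_proj_def cmat_carrier_def less_Suc_eq)
  with Q have "cmat_proj N Q"
    by (rule cmat_proj_shrink) simp
  then show ?thesis
    using that H(1) unfolding Q_def by blast
qed

lemma cmat_proj_diagonalize:
  assumes "cmat_proj N P"
  obtains U r where "cmat_unitary N U" and "r \<le> N" and "cmat_conj N U P = cmat_id r"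
proof -
  from assms have "\<exists>U r. cmat_unitary N U \<and> r \<le> N \<and> cmat_conj N U P = cmat_id r"
  proof (induction N arbitrary: P)
    case 0
    then have "cmat_conj 0 (cmat_id 0) P = cmat_id 0"
      by (simp add: cmat_conj_def cmat_mult_def cmat_id_def fun_eq_iff)
    then show ?case
      using cmat_unitary_id by blast
  next
    case (Suc N)
    show ?case
    proof (cases "P = cmat_id (Suc N)")
      case True
      then have "cmat_conj (Suc N) (cmat_id (Suc N)) P = cmat_id (Suc N)"
        by (simp add: cmat_conj_def cmat_mult_id_left cmat_id_carrier)
      then show ?thesis
        using cmat_unitary_id by blast
    next
      case False
      then obtain H where H: "cmat_unitary (Suc N) H" and Q: "cmat_proj N (cmat_conj (Suc N) H P)"
        using cmat_proj_deflate Suc.prems by blast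
      then obtain U r where U: "cmat_unitary N U" "r \<le> N" "cmat_conj N U (cmat_conj (Suc N) H P) = cmat_id r"
        using Suc.IH by blast
      define V where "V = block_diag N 1 U (cmat_id 1)"
      have "cmat_unitary (N + 1) V"
        unfolding V_def by (rule cmat_unitary_block_diag[OF U(1) cmat_unitary_id])
      then have "cmat_unitary (Suc N) (cmat_mult (Suc N) V H)"
        using H by (simp add: cmat_unitary_mult)
      moreover have "cmat_conj (Suc N) V (cmat_conj (Suc N) H P) = cmat_conj N U (cmat_conj (Suc N) H P)"
        unfolding V_def using U(1) Q by (intro cmat_conj_extend) (simp_all add: cmat_unitary_def cmat_proj_def)
      then have "cmat_conj (Suc N) (cmat_mult (Suc N) V H) P = cmat_id r"
        using U(3) by (simp add: cmat_conj_conj)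
      ultimately show ?thesis
        using U(2) le_SucI by blast
    qed
  qed
  then show ?thesis
    using that by blast
qed

lemma cmat_proj_trace_diagonal:
  assumes "cmat_proj K P" and "cmat_unitary K U" and "r \<le> K" and "cmat_conj K U P = cmat_id r"
  shows "cmat_trace K P = of_nat r"
  using assms cmat_trace_conj[of K U P] by (simp add: cmat_proj_def cmat_trace_id_le)

lemma cmat_proj_trace_of_nat:
  assumes "cmat_proj K P"
  obtains r where "cmat_trace K P = of_nat r"
proof -
  obtain U r where "cmat_unitary K U" and "r \<le> K" and "cmat_conj K U P = cmat_id r"
    using assms by (rule cmat_proj_diagonalize)
  with assms have "cmat_trace K P = of_nat r"
    by (rule cmat_proj_trace_diagonal)
  then show ?thesis
    by (rule that)
qed

lemma cmat_proj_unitarily_equivalent: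
  assumes P: "cmat_proj K P" and Q: "cmat_proj K Q" and tr: "cmat_trace K P = cmat_trace K Q"
  obtains W where "cmat_unitary K W" and "P = cmat_conj K W Q"
proof -
  obtain U r where U: "cmat_unitary K U" "r \<le> K" "cmat_conj K U P = cmat_id r"
    using P by (rule cmat_proj_diagonalize)
  obtain V s where V: "cmat_unitary K V" "s \<le> K" "cmat_conj K V Q = cmat_id s"
    using Q by (rule cmat_proj_diagonalize)
  have "r = s"
    using tr cmat_proj_trace_diagonal[OF P U] cmat_proj_trace_diagonal[OF Q V] by simp
  have "P = cmat_conj K (cmat_adj U) (cmat_conj K U P)"
    using U(1) P by (simp add: cmat_conj_adj_conj cmat_proj_def)
  also have "\<dots> = cmat_conj K (cmat_mult K (cmat_adj U) V) Q"
    unfolding U(3) \<open>r = s\<close> V(3)[symmetric] by (rule cmat_conj_conj)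
  finally show ?thesis
    using that cmat_unitary_mult[OF cmat_unitary_adj[OF U(1)] V(1)] by blast
qed

lemma cmat_proj_unitarily_equiv_iff_trace:
  assumes A: "cmat_proj N A" and B: "cmat_proj M B"
  shows "(\<exists>K W. N \<le> K \<and> M \<le> K \<and> cmat_unitary K W \<and> A = cmat_conj K W B) \<longleftrightarrow>
    cmat_trace N A = cmat_trace M B"
proof -
  have AN: "A \<in> cmat_carrier N" and BM: "B \<in> cmat_carrier M"
    using A B by (simp_all add: cmat_proj_def)
  show ?thesis
  proof
    assume "\<exists>K W. N \<le> K \<and> M \<le> K \<and> cmat_unitary K W \<and> A = cmat_conj K W B"
    then obtain K W where "N \<le> K" "M \<le> K" "cmat_unitary K W" "A = cmat_conj K W B"
      by blast
    have "cmat_trace N A = cmat_trace K A"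
      by (rule cmat_trace_shrink[OF AN \<open>N \<le> K\<close>, symmetric])
    also have "\<dots> = cmat_trace K B"
      using cmat_trace_conj[OF \<open>cmat_unitary K W\<close>] cmat_carrier_mono[OF \<open>M \<le> K\<close>] BM
        \<open>A = cmat_conj K W B\<close> by blast
    also have "\<dots> = cmat_trace M B"
      by (rule cmat_trace_shrink[OF BM \<open>M \<le> K\<close>])
    finally show "cmat_trace N A = cmat_trace M B" .
  next
    assume tr: "cmat_trace N A = cmat_trace M B"
    define K where "K = max N M"
    have "N \<le> K" and "M \<le> K"
      by (simp_all add: K_def)
    then have "cmat_proj K A" and "cmat_proj K B"
      using A B by (simp_all add: cmat_proj_mono)
    moreover have "cmat_trace K A = cmat_trace K B"
      using tr cmat_trace_shrink[OF AN \<open>N \<le> K\<close>] cmat_trace_shrink[OF BM \<open>M \<le> K\<close>] by simp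
    ultimately obtain W where "cmat_unitary K W" and "A = cmat_conj K W B"
      by (rule cmat_proj_unitarily_equivalent)
    then show "\<exists>K W. N \<le> K \<and> M \<le> K \<and> cmat_unitary K W \<and> A = cmat_conj K W B"
      using \<open>N \<le> K\<close> \<open>M \<le> K\<close> by blast
  qed
qed

section \<open>Leading monomials\<close>

definition lex_le :: "(nat \<Rightarrow> 'a::linorder) \<Rightarrow> (nat \<Rightarrow> 'a) \<Rightarrow> bool" where
  "lex_le f g \<longleftrightarrow> less_fun f g \<or> f = g"

lemma less_fun_linear_nat:
  fixes f g :: "nat \<Rightarrow> 'a::linorder"
  shows "less_fun f g \<or> f = g \<or> less_fun g f"
proof (cases "f = g")
  case False
  then have "\<exists>k. f k \<noteq> g k"
    by (auto simp: fun_eq_iff)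
  define k where "k = (LEAST k. f k \<noteq> g k)"
  have "f k \<noteq> g k"
    unfolding k_def using \<open>\<exists>k. f k \<noteq> g k\<close> by (rule LeastI_ex)
  moreover have below: "f k' = g k'" if "k' < k" for k'
    using not_less_Least[of k' "\<lambda>k. f k \<noteq> g k"] that unfolding k_def by blast
  ultimately consider "f k < g k" | "g k < f k"
    by (metis linorder_neqE)
  then show ?thesis
  proof cases
    case 1
    then have "less_fun f g" using below by (intro less_funI) blast
    then show ?thesis ..
  next
    case 2
    then have "less_fun g f" using below by (intro less_funI) (metis)
    then show ?thesis by blast
  qed
qed simp

lemma lex_le_refl: "lex_le f f"
  by (simp add: lex_le_def)

lemma lex_le_trans: "lex_le f g \<Longrightarrow> lex_le g h \<Longrightarrow> lex_le f h"
  unfolding lex_le_def using less_fun_trans[of f g h] by auto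

lemma lex_le_antisym: "lex_le f g \<Longrightarrow> lex_le g f \<Longrightarrow> f = g"
  unfolding lex_le_def using less_fun_asym[of f g] by auto

lemma not_lex_le: "\<not> lex_le f g \<longleftrightarrow> less_fun g f"
  unfolding lex_le_def using less_fun_linear_nat[of f g] less_fun_asym[of g f] less_fun_irrefl[of f]
  by auto

lemma finite_has_lex_max:
  assumes "finite S" and "S \<noteq> {}"
  obtains L where "L \<in> S" and "\<And>\<alpha>. \<alpha> \<in> S \<Longrightarrow> lex_le \<alpha> L"
proof -
  from assms have "\<exists>L\<in>S. \<forall>\<alpha>\<in>S. lex_le \<alpha> L"
  proof (induction rule: finite_ne_induct)
    case (singleton x)
    then show ?case by (simp add: lex_le_refl)
  next
    case (insert x F)
    then obtain L where "L \<in> F" and L: "\<forall>\<alpha>\<in>F. lex_le \<alpha> L" by blast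
    show ?case
    proof (cases "lex_le x L")
      case True
      then show ?thesis using \<open>L \<in> F\<close> L by blast
    next
      case False
      then have "lex_le L x" by (simp add: not_lex_le) (simp add: lex_le_def)
      then show ?thesis using L lex_le_trans lex_le_refl by blast
    qed
  qed
  then show ?thesis using that by blast
qed

lemma lex_le_add_right: "lex_le f g \<Longrightarrow> lex_le (\<lambda>p. f p + h p) (\<lambda>p. g p + h p :: nat)"
  by (auto simp: lex_le_def less_fun_def)

lemma less_fun_add_left: "less_fun f g \<Longrightarrow> less_fun (\<lambda>p. h p + f p) (\<lambda>p. h p + g p :: nat)"
  by (auto simp: less_fun_def)

lemma le_imp_lex_le:
  fixes f g :: "nat \<Rightarrow> nat"
  assumes "f \<le> g"
  shows "lex_le f g"
proof -
  have "\<not> less_fun g f"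
  proof
    assume "less_fun g f"
    then obtain k where "g k < f k" by (blast elim: less_funE)
    moreover have "f k \<le> g k" using assms by (simp add: le_fun_def)
    ultimately show False by simp
  qed
  then show ?thesis
    using not_lex_le by blast
qed

lemma less_fun_double:
  fixes L :: "nat \<Rightarrow> nat"
  assumes "L \<noteq> (\<lambda>_. 0)"
  shows "less_fun L (\<lambda>p. L p + L p)"
proof -
  have "less_fun (\<lambda>_. 0) L"
    using assms le_imp_lex_le[of "\<lambda>_. 0" L] by (simp add: lex_le_def le_fun_def)
  then show ?thesis
    using less_fun_add_left[of "\<lambda>_. 0" L L] by simp
qed

lemma lex_le_double_imp_eq:
  fixes \<alpha> \<beta> L :: "nat \<Rightarrow> nat"
  assumes \<alpha>: "lex_le \<alpha> L" and \<beta>: "lex_le \<beta> L" and LL: "(\<lambda>p. L p + L p) \<le> (\<lambda>p. \<alpha> p + \<beta> p)"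
  shows "\<alpha> = L \<and> \<beta> = L"
proof -
  have "\<beta> = L"
  proof (rule ccontr)
    assume "\<beta> \<noteq> L"
    then have "less_fun \<beta> L"
      using \<beta> by (simp add: lex_le_def)
    then have "less_fun (\<lambda>p. L p + \<beta> p) (\<lambda>p. L p + L p)"
      by (rule less_fun_add_left)
    moreover have "lex_le (\<lambda>p. L p + L p) (\<lambda>p. L p + \<beta> p)"
      using lex_le_trans[OF le_imp_lex_le[OF LL] lex_le_add_right[OF \<alpha>]] .
    ultimately show False
      by (simp add: not_lex_le[symmetric])
  qed
  moreover from this have "L \<le> \<alpha>"
    using LL by (simp add: le_fun_def)
  ultimately show ?thesis
    using \<alpha> le_imp_lex_le lex_le_antisym by blast
qed

lemma finite_funs_le:
  assumes "finite {m. b m \<noteq> 0}"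
  shows "finite {k :: nat \<Rightarrow> nat. \<forall>m. k m \<le> b m}"
proof -
  let ?D = "{m. b m \<noteq> 0}"
  have "{k. \<forall>m. k m \<le> b m} \<subseteq> (\<lambda>f m. if m \<in> ?D then f m else 0) ` (\<Pi>\<^sub>E m\<in>?D. {..b m})"
  proof
    fix k :: "nat \<Rightarrow> nat"
    assume "k \<in> {k. \<forall>m. k m \<le> b m}"
    then have k: "\<forall>m. k m \<le> b m" by simp
    then have "k = (\<lambda>m. if m \<in> ?D then restrict k ?D m else 0)"
      by (auto simp: fun_eq_iff) (metis le_zero_eq)
    moreover have "restrict k ?D \<in> (\<Pi>\<^sub>E m\<in>?D. {..b m})"
      using k by auto
    ultimately show "k \<in> (\<lambda>f m. if m \<in> ?D then f m else 0) ` (\<Pi>\<^sub>E m\<in>?D. {..b m})"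
      by blast
  qed
  moreover have "finite (\<Pi>\<^sub>E m\<in>?D. {..b m})"
    using assms by (intro finite_PiE) auto
  ultimately show ?thesis
    by (meson finite_surj)
qed

lemma mono_mult_nonzero_le:
  "mono_mult n \<Theta> \<alpha> \<beta> \<gamma> \<noteq> 0 \<Longrightarrow> \<gamma> \<le> (\<lambda>p. \<alpha> p + \<beta> p)"
  unfolding mono_mult_def le_fun_def
  by (drule sum.not_neutral_contains_not_neutral) (auto split: if_splits)

lemma mono_mult_at_sum: "mono_mult n \<Theta> \<alpha> \<beta> (\<lambda>p. \<alpha> p + \<beta> p) = 1"
proof -
  let ?b = "\<lambda>m. if m \<in> {1..n} then min (\<alpha> (2*m)) (\<beta> (2*m-1)) else 0"
  have fin: "finite {k. \<forall>m. k m \<le> ?b m}"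
    by (rule finite_funs_le, rule finite_subset[of _ "{1..n}"]) auto
  have shifted: "(\<lambda>p. \<alpha> p + \<beta> p) \<noteq> (\<lambda>p. \<alpha> p + \<beta> p - k ((p+1) div 2))"
    if "\<forall>m. k m \<le> ?b m" and "k \<noteq> (\<lambda>_. 0)" for k
  proof -
    obtain m where "k m \<noteq> 0" using \<open>k \<noteq> (\<lambda>_. 0)\<close> by auto
    moreover have "k m \<le> \<alpha> (2*m)" and "(2*m+1) div 2 = m"
      using that(1) \<open>k m \<noteq> 0\<close> by (auto simp: le_fun_def split: if_splits dest!: spec[of _ m])
    ultimately have "\<alpha> (2*m) + \<beta> (2*m) - k ((2*m+1) div 2) \<noteq> \<alpha> (2*m) + \<beta> (2*m)"
      by simp
    then show ?thesis by metis
  qed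
  show ?thesis
    unfolding mono_mult_def by (rule trans[OF sum_eq_single[OF fin, where a = "\<lambda>_. 0"]]) (use shifted in auto)
qed

lemma mono_mult_zero_zero: "mono_mult n \<Theta> (\<lambda>_. 0) (\<lambda>_. 0) = nc_one"
proof -
  have "{k :: nat \<Rightarrow> nat. \<forall>m. k m \<le> (if m \<in> {1..n} then min 0 0 else 0)} = {\<lambda>_. 0}"
    by auto
  then show ?thesis
    unfolding mono_mult_def nc_one_def by (simp add: fun_eq_iff)
qed

lemma nc_carrier_finite_support: "f \<in> nc_carrier n \<Longrightarrow> finite {\<alpha>. f \<alpha> \<noteq> 0}"
  unfolding nc_carrier_def by simp

lemma nc_star_nonzero_le:
  assumes "nc_star n \<Theta> f \<gamma> \<noteq> 0"
  obtains \<alpha> where "f \<alpha> \<noteq> 0" and "\<gamma> \<le> \<alpha>"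
proof -
  let ?ev = "\<lambda>\<alpha> p. if even p then \<alpha> p else (0::nat)"
  let ?od = "\<lambda>\<alpha> p. if odd p then \<alpha> p else (0::nat)"
  obtain \<alpha> where "f \<alpha> \<noteq> 0" and "cnj (f \<alpha>) * mono_mult n \<Theta> (?ev \<alpha>) (?od \<alpha>) \<gamma> \<noteq> 0"
    using assms unfolding nc_star_def by (rule sum.not_neutral_contains_not_neutral) simp
  moreover have "(\<lambda>p. ?ev \<alpha> p + ?od \<alpha> p) = \<alpha>"
    by auto
  ultimately have "\<gamma> \<le> \<alpha>"
    using mono_mult_nonzero_le[of n \<Theta> "?ev \<alpha>" "?od \<alpha>" \<gamma>] by simp
  with \<open>f \<alpha> \<noteq> 0\<close> show ?thesis
    by (rule that)
qed

lemma finite_support_nc_star: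
  assumes "f \<in> nc_carrier n"
  shows "finite {\<gamma>. nc_star n \<Theta> f \<gamma> \<noteq> 0}"
proof (rule finite_subset)
  show "{\<gamma>. nc_star n \<Theta> f \<gamma> \<noteq> 0} \<subseteq> (\<Union>\<alpha>\<in>{\<alpha>. f \<alpha> \<noteq> 0}. {\<gamma>. \<forall>p. \<gamma> p \<le> \<alpha> p})"
  proof
    fix \<gamma>
    assume "\<gamma> \<in> {\<gamma>. nc_star n \<Theta> f \<gamma> \<noteq> 0}"
    then obtain \<alpha> where "f \<alpha> \<noteq> 0" and "\<gamma> \<le> \<alpha>"
      by (blast elim: nc_star_nonzero_le)
    then show "\<gamma> \<in> (\<Union>\<alpha>\<in>{\<alpha>. f \<alpha> \<noteq> 0}. {\<gamma>. \<forall>p. \<gamma> p \<le> \<alpha> p})"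
      by (auto simp: le_fun_def)
  qed
  have "finite {p. \<alpha> p \<noteq> 0}" if "f \<alpha> \<noteq> 0" for \<alpha>
    using assms that unfolding nc_carrier_def by (auto intro: finite_subset[of _ "{1..2*n}"])
  then show "finite (\<Union>\<alpha>\<in>{\<alpha>. f \<alpha> \<noteq> 0}. {\<gamma>. \<forall>p. \<gamma> p \<le> \<alpha> p})"
    by (intro finite_UN_I nc_carrier_finite_support[OF assms] finite_funs_le) auto
qed

lemma nc_star_at_lex_top:
  assumes fin: "finite {\<alpha>. f \<alpha> \<noteq> 0}" and top: "\<And>\<alpha>. f \<alpha> \<noteq> 0 \<Longrightarrow> lex_le \<alpha> L"
  shows "nc_star n \<Theta> f L = cnj (f L)"
proof -
  let ?ev = "\<lambda>\<alpha> p. if even p then \<alpha> p else (0::nat)"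
  let ?od = "\<lambda>\<alpha> p. if odd p then \<alpha> p else (0::nat)"
  have split: "(\<lambda>p. ?ev \<alpha> p + ?od \<alpha> p) = \<alpha>" for \<alpha> :: "nat \<Rightarrow> nat"
    by auto
  have "nc_star n \<Theta> f L =
      (if L \<in> {\<alpha>. f \<alpha> \<noteq> 0} then cnj (f L) * mono_mult n \<Theta> (?ev L) (?od L) L else 0)"
    unfolding nc_star_def
  proof (rule sum_eq_single[OF fin])
    fix \<alpha>
    assume \<alpha>: "\<alpha> \<in> {\<alpha>. f \<alpha> \<noteq> 0}" "\<alpha> \<noteq> L"
    have "\<not> L \<le> \<alpha>"
      using \<alpha> top[of \<alpha>] le_imp_lex_le[of L \<alpha>] lex_le_antisym[of \<alpha> L] by auto
    then have "mono_mult n \<Theta> (?ev \<alpha>) (?od \<alpha>) L = 0"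
      using mono_mult_nonzero_le[of n \<Theta> "?ev \<alpha>" "?od \<alpha>" L] unfolding split by argo
    then show "cnj (f \<alpha>) * mono_mult n \<Theta> (?ev \<alpha>) (?od \<alpha>) L = 0"
      by simp
  qed
  moreover have "mono_mult n \<Theta> (?ev L) (?od L) L = 1"
    using mono_mult_at_sum[of n \<Theta> "?ev L" "?od L"] unfolding split .
  ultimately show ?thesis
    by (simp split: if_splits)
qed

lemma nc_mult_star_self_at_double:
  assumes fin: "finite {\<alpha>. f \<alpha> \<noteq> 0}" and fin_star: "finite {\<alpha>. nc_star n \<Theta> f \<alpha> \<noteq> 0}"
    and top: "\<And>\<alpha>. f \<alpha> \<noteq> 0 \<Longrightarrow> lex_le \<alpha> L"
  shows "nc_mult n \<Theta> (nc_star n \<Theta> f) f (\<lambda>p. L p + L p) = cnj (f L) * f L"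
proof -
  let ?g = "nc_star n \<Theta> f" and ?LL = "\<lambda>p. L p + L p"
  have star_top: "?g L = cnj (f L)"
    using fin top by (rule nc_star_at_lex_top)
  have only_top: "\<alpha> = L \<and> \<beta> = L"
    if g: "?g \<alpha> \<noteq> 0" and f: "f \<beta> \<noteq> 0" and m: "mono_mult n \<Theta> \<alpha> \<beta> ?LL \<noteq> 0" for \<alpha> \<beta>
  proof (rule lex_le_double_imp_eq)
    obtain \<alpha>' where "f \<alpha>' \<noteq> 0" and "\<alpha> \<le> \<alpha>'"
      using g by (rule nc_star_nonzero_le)
    then show "lex_le \<alpha> L"
      using lex_le_trans[OF le_imp_lex_le top] by blast
    show "lex_le \<beta> L"
      using f by (rule top)
    show "?LL \<le> (\<lambda>p. \<alpha> p + \<beta> p)"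
      using m by (rule mono_mult_nonzero_le)
  qed
  have "nc_mult n \<Theta> ?g f ?LL =
      (\<Sum>\<alpha>\<in>{\<alpha>. ?g \<alpha> \<noteq> 0}. \<Sum>\<beta>\<in>{\<beta>. f \<beta> \<noteq> 0}.
         if \<alpha> = L then if \<beta> = L then cnj (f L) * f L else 0 else 0)"
    unfolding nc_mult_def
  proof (intro sum.cong refl)
    fix \<alpha> \<beta>
    show "?g \<alpha> * f \<beta> * mono_mult n \<Theta> \<alpha> \<beta> ?LL =
        (if \<alpha> = L then if \<beta> = L then cnj (f L) * f L else 0 else 0)"
    proof (cases "\<alpha> = L \<and> \<beta> = L")
      case True
      then show ?thesis
        using mono_mult_at_sum[of n \<Theta> L L] star_top by simp
    next
      case False
      then show ?thesis
        using only_top[of \<alpha> \<beta>] by auto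
    qed
  qed
  also have "\<dots> = (\<Sum>\<alpha>\<in>{\<alpha>. ?g \<alpha> \<noteq> 0}.
      if \<alpha> = L then \<Sum>\<beta>\<in>{\<beta>. f \<beta> \<noteq> 0}. if \<beta> = L then cnj (f L) * f L else 0 else 0)"
    by (intro sum.cong) simp_all
  also have "\<dots> = cnj (f L) * f L"
    using fin fin_star star_top by (cases "f L = 0") simp_all
  finally show ?thesis .
qed

lemma mat_star_mult_diag_at_double:
  assumes M: "is_mat n K M" and "i < K" and top: "\<And>l \<alpha>. l < K \<Longrightarrow> M l i \<alpha> \<noteq> 0 \<Longrightarrow> lex_le \<alpha> L"
  shows "mat_mult n \<Theta> K (mat_star n \<Theta> M) M i i (\<lambda>p. L p + L p) = (\<Sum>l<K. cnj (M l i L) * M l i L)"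
  unfolding mat_mult_def mat_star_def
proof (intro sum.cong refl nc_mult_star_self_at_double)
  fix l
  assume "l \<in> {..<K}"
  then have "M l i \<in> nc_carrier n"
    using M \<open>i < K\<close> by (simp add: is_mat_def)
  then show "finite {\<alpha>. M l i \<alpha> \<noteq> 0}" and "finite {\<alpha>. nc_star n \<Theta> (M l i) \<alpha> \<noteq> 0}"
    by (rule nc_carrier_finite_support, rule finite_support_nc_star)
  show "lex_le \<alpha> L" if "M l i \<alpha> \<noteq> 0" for \<alpha>
    using top \<open>l \<in> {..<K}\<close> that by blast
qed

lemma is_mat_nonconstant_witness:
  assumes M: "is_mat n K M" and "l0 < K" and "j0 < K"
    and "\<gamma>0 \<noteq> (\<lambda>_. 0)" and "M l0 j0 \<gamma>0 \<noteq> 0"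
  obtains i L where "i < K" and "L \<noteq> (\<lambda>_. 0)"
    and "\<forall>l<K. \<forall>j<K. M l j (\<lambda>p. L p + L p) = 0"
    and "mat_mult n \<Theta> K (mat_star n \<Theta> M) M i i (\<lambda>p. L p + L p) \<noteq> 0"
proof -
  define S where "S = (\<Union>l<K. \<Union>j<K. {\<alpha>. M l j \<alpha> \<noteq> 0})"
  have "finite S"
    using M unfolding S_def is_mat_def by (intro finite_UN_I nc_carrier_finite_support) auto
  moreover have "\<gamma>0 \<in> S"
    unfolding S_def using assms by blast
  ultimately obtain L where "L \<in> S" and L_max: "\<And>\<alpha>. \<alpha> \<in> S \<Longrightarrow> lex_le \<alpha> L"
    using finite_has_lex_max by blast
  have "L \<noteq> (\<lambda>_. 0)"
  proof
    assume "L = (\<lambda>_. 0)"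
    then have "lex_le \<gamma>0 (\<lambda>_. 0)"
      using L_max \<open>\<gamma>0 \<in> S\<close> by blast
    moreover have "lex_le (\<lambda>_. 0) \<gamma>0"
      by (rule le_imp_lex_le) (simp add: le_fun_def)
    ultimately show False
      using lex_le_antisym \<open>\<gamma>0 \<noteq> (\<lambda>_. 0)\<close> by blast
  qed
  then have "\<not> lex_le (\<lambda>p. L p + L p) L"
    by (simp add: not_lex_le less_fun_double)
  then have vanish: "\<forall>l<K. \<forall>j<K. M l j (\<lambda>p. L p + L p) = 0"
    using L_max unfolding S_def by blast
  from \<open>L \<in> S\<close> obtain l1 i where "l1 < K" and "i < K" and "M l1 i L \<noteq> 0"
    unfolding S_def by blast
  have "mat_mult n \<Theta> K (mat_star n \<Theta> M) M i i (\<lambda>p. L p + L p) = (\<Sum>l<K. cnj (M l i L) * M l i L)"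
    using M \<open>i < K\<close> by (rule mat_star_mult_diag_at_double) (use L_max \<open>i < K\<close> in \<open>auto simp: S_def\<close>)
  also have "\<dots> \<noteq> 0"
    using \<open>l1 < K\<close> \<open>M l1 i L \<noteq> 0\<close> by (auto simp: sum_cnj_mult_self_eq_0_iff)
  finally show ?thesis
    using that \<open>i < K\<close> \<open>L \<noteq> (\<lambda>_. 0)\<close> vanish by blast
qed

section \<open>Projectors and unitaries over the algebra are scalar\<close>

definition nc_const :: "complex \<Rightarrow> nc_elem" where
  "nc_const c = (\<lambda>\<gamma>. if \<gamma> = (\<lambda>_. 0) then c else 0)"

lemma nc_zero_eq_const: "nc_zero = nc_const 0"
  and nc_one_eq_const: "nc_one = nc_const 1"
  by (auto simp: nc_zero_def nc_one_def nc_const_def fun_eq_iff)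

lemma support_nc_const: "{\<alpha>. nc_const c \<alpha> \<noteq> 0} = (if c = 0 then {} else {\<lambda>_. 0})"
  by (auto simp: nc_const_def)

lemma nc_const_in_carrier: "nc_const c \<in> nc_carrier n"
  unfolding nc_carrier_def by (simp add: support_nc_const) (simp add: nc_const_def)

lemma nc_const_inject: "nc_const a = nc_const b \<longleftrightarrow> a = b"
  by (auto simp: nc_const_def fun_eq_iff dest: spec[of _ "\<lambda>_. 0"])

lemma sum_nc_const: "(\<Sum>l\<in>A. nc_const (f l) \<gamma>) = nc_const (\<Sum>l\<in>A. f l) \<gamma>"
  by (simp add: nc_const_def)

lemma nc_mult_const: "nc_mult n \<Theta> (nc_const a) (nc_const b) = nc_const (a * b)"
proof
  fix \<gamma>
  have "nc_mult n \<Theta> (nc_const a) (nc_const b) \<gamma> =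
      (if a = 0 \<or> b = 0 then 0 else a * b * mono_mult n \<Theta> (\<lambda>_. 0) (\<lambda>_. 0) \<gamma>)"
    unfolding nc_mult_def support_nc_const by (simp add: nc_const_def)
  then show "nc_mult n \<Theta> (nc_const a) (nc_const b) \<gamma> = nc_const (a * b) \<gamma>"
    by (simp add: mono_mult_zero_zero nc_one_def nc_const_def)
qed

lemma nc_star_const: "nc_star n \<Theta> (nc_const a) = nc_const (cnj a)"
proof -
  have "(\<lambda>p. if even p then (0::nat) else 0) = (\<lambda>_. 0)" "(\<lambda>p. if odd p then (0::nat) else 0) = (\<lambda>_. 0)"
    by auto
  then have "nc_star n \<Theta> (nc_const a) \<gamma> =
      (if a = 0 then 0 else cnj a * mono_mult n \<Theta> (\<lambda>_. 0) (\<lambda>_. 0) \<gamma>)" for \<gamma>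
    unfolding nc_star_def support_nc_const by (simp add: nc_const_def)
  then show ?thesis
    by (simp add: fun_eq_iff mono_mult_zero_zero nc_one_def nc_const_def)
qed

definition const_mat :: "cmat \<Rightarrow> nc_mat" where
  "const_mat A = (\<lambda>i j. nc_const (A i j))"

definition const_part :: "nc_mat \<Rightarrow> cmat" where
  "const_part P = (\<lambda>i j. P i j (\<lambda>_. 0))"

lemma const_part_const_mat [simp]: "const_part (const_mat A) = A"
  by (simp add: const_part_def const_mat_def nc_const_def)

lemma const_mat_inject: "const_mat A = const_mat B \<longleftrightarrow> A = B"
  by (metis const_part_const_mat)

lemma mat_mult_const_mat: "mat_mult n \<Theta> K (const_mat A) (const_mat B) = const_mat (cmat_mult K A B)"
  by (simp add: mat_mult_def const_mat_def cmat_mult_def nc_mult_const sum_nc_const)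

lemma mat_star_const_mat: "mat_star n \<Theta> (const_mat A) = const_mat (cmat_adj A)"
  by (simp add: mat_star_def const_mat_def cmat_adj_def nc_star_const)

lemma mat_id_eq_const_mat: "mat_id K = const_mat (cmat_id K)"
  by (auto simp: mat_id_def const_mat_def cmat_id_def nc_one_eq_const nc_zero_eq_const fun_eq_iff)

lemma is_mat_const_mat_iff: "is_mat n K (const_mat A) \<longleftrightarrow> A \<in> cmat_carrier K"
  by (auto simp: is_mat_def cmat_carrier_def const_mat_def nc_const_in_carrier nc_zero_eq_const
      nc_const_inject)

lemma is_mat_eq_const_mat:
  assumes M: "is_mat n K M"
    and diag: "\<And>i \<gamma>. i < K \<Longrightarrow> \<gamma> \<noteq> (\<lambda>_. 0) \<Longrightarrow> \<forall>l<K. \<forall>j<K. M l j \<gamma> = 0 \<Longrightarrow>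
                 mat_mult n \<Theta> K (mat_star n \<Theta> M) M i i \<gamma> = 0"
  shows "M = const_mat (const_part M)"
proof (intro ext)
  fix l j \<gamma>
  show "M l j \<gamma> = const_mat (const_part M) l j \<gamma>"
  proof (cases "l < K \<and> j < K \<and> \<gamma> \<noteq> (\<lambda>_. 0)")
    case True
    then have "l < K" and "j < K" and "\<gamma> \<noteq> (\<lambda>_. 0)"
      by simp_all
    have "M l j \<gamma> = 0"
    proof (rule ccontr)
      assume "M l j \<gamma> \<noteq> 0"
      then obtain i L where "i < K" and "L \<noteq> (\<lambda>_. 0)"
        and vanish: "\<forall>l<K. \<forall>j<K. M l j (\<lambda>p. L p + L p) = 0"
        and nonzero: "mat_mult n \<Theta> K (mat_star n \<Theta> M) M i i (\<lambda>p. L p + L p) \<noteq> 0"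
        by (rule is_mat_nonconstant_witness[where \<Theta> = \<Theta>, OF M \<open>l < K\<close> \<open>j < K\<close> \<open>\<gamma> \<noteq> (\<lambda>_. 0)\<close>])
      have "(\<lambda>p. L p + L p) \<noteq> (\<lambda>_. 0)"
        using \<open>L \<noteq> (\<lambda>_. 0)\<close> by (auto simp: fun_eq_iff)
      from \<open>i < K\<close> this vanish have "mat_mult n \<Theta> K (mat_star n \<Theta> M) M i i (\<lambda>p. L p + L p) = 0"
        by (rule diag)
      with nonzero show False ..
    qed
    with True show ?thesis
      by (simp add: const_mat_def const_part_def nc_const_def)
  next
    case False
    moreover have "M l j = nc_zero" if "\<not> (l < K \<and> j < K)"
      using M that by (simp add: is_mat_def)
    ultimately show ?thesis
      by (auto simp: const_mat_def const_part_def nc_const_def nc_zero_def)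
  qed
qed

lemma is_unitary_const_mat_iff: "is_unitary n \<Theta> K (const_mat W) \<longleftrightarrow> cmat_unitary K W"
  by (simp add: is_unitary_def cmat_unitary_def is_mat_const_mat_iff mat_mult_const_mat
      mat_star_const_mat mat_id_eq_const_mat const_mat_inject)

lemma projector_const_mat_iff: "(N, const_mat A) \<in> projectors n \<Theta> \<longleftrightarrow> cmat_proj N A"
  by (simp add: projectors_def cmat_proj_def is_mat_const_mat_iff mat_mult_const_mat
      mat_star_const_mat const_mat_inject)

lemma is_unitary_iff_const:
  "is_unitary n \<Theta> K U \<longleftrightarrow> (\<exists>W. cmat_unitary K W \<and> U = const_mat W)"
proof
  assume U: "is_unitary n \<Theta> K U"
  then have M: "is_mat n K U" and UU: "mat_mult n \<Theta> K (mat_star n \<Theta> U) U = mat_id K"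
    by (simp_all add: is_unitary_def)
  have "U = const_mat (const_part U)"
  proof (rule is_mat_eq_const_mat[where \<Theta> = \<Theta>, OF M])
    fix i and \<gamma> :: "nat \<Rightarrow> nat"
    assume "\<gamma> \<noteq> (\<lambda>_. 0)"
    then show "mat_mult n \<Theta> K (mat_star n \<Theta> U) U i i \<gamma> = 0"
      unfolding UU by (simp add: mat_id_def nc_one_def nc_zero_def)
  qed
  with U show "\<exists>W. cmat_unitary K W \<and> U = const_mat W"
    by (metis is_unitary_const_mat_iff)
next
  assume "\<exists>W. cmat_unitary K W \<and> U = const_mat W"
  then show "is_unitary n \<Theta> K U"
    using is_unitary_const_mat_iff by blast
qed

lemma projector_iff_const:
  "(N, P) \<in> projectors n \<Theta> \<longleftrightarrow> (\<exists>A. cmat_proj N A \<and> P = const_mat A)"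
proof
  assume P: "(N, P) \<in> projectors n \<Theta>"
  then have M: "is_mat n N P" and idem: "mat_mult n \<Theta> N P P = P" and sa: "mat_star n \<Theta> P = P"
    by (simp_all add: projectors_def)
  have "P = const_mat (const_part P)"
    using M by (rule is_mat_eq_const_mat[where \<Theta> = \<Theta>]) (simp add: sa idem)
  with P show "\<exists>A. cmat_proj N A \<and> P = const_mat A"
    by (metis projector_const_mat_iff)
next
  assume "\<exists>A. cmat_proj N A \<and> P = const_mat A"
  then show "(N, P) \<in> projectors n \<Theta>"
    using projector_const_mat_iff by blast
qed

definition proj_trace :: "nat \<times> nc_mat \<Rightarrow> complex" where
  "proj_trace p = cmat_trace (fst p) (const_part (snd p))"

lemma proj_trace_const_mat [simp]: "proj_trace (N, const_mat A) = cmat_trace N A"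
  by (simp add: proj_trace_def)

lemma projectorE:
  assumes "p \<in> projectors n \<Theta>"
  obtains N A where "p = (N, const_mat A)" and "cmat_proj N A"
proof -
  obtain N P where "p = (N, P)"
    by fastforce
  with assms show ?thesis
    using that projector_iff_const by blast
qed

lemma const_projector: "cmat_proj N A \<Longrightarrow> (N, const_mat A) \<in> projectors n \<Theta>"
  by (simp add: projector_const_mat_iff)

lemma proj_trace_of_nat:
  assumes "p \<in> projectors n \<Theta>"
  obtains r where "proj_trace p = of_nat r"
  using assms by (elim projectorE cmat_proj_trace_of_nat) simp

lemma proj_equiv_const_mat_iff:
  "proj_equiv n \<Theta> (N, const_mat A) (M, const_mat B) \<longleftrightarrow>
     (\<exists>K W. N \<le> K \<and> M \<le> K \<and> cmat_unitary K W \<and> A = cmat_conj K W B)"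
proof
  assume "proj_equiv n \<Theta> (N, const_mat A) (M, const_mat B)"
  then obtain K U where K: "N \<le> K" "M \<le> K" and "is_unitary n \<Theta> K U"
    and eq: "const_mat A = mat_mult n \<Theta> K (mat_mult n \<Theta> K U (const_mat B)) (mat_star n \<Theta> U)"
    unfolding proj_equiv_def by auto
  then obtain W where W: "cmat_unitary K W" and "U = const_mat W"
    using is_unitary_iff_const by blast
  with eq have "A = cmat_conj K W B"
    by (simp add: mat_mult_const_mat mat_star_const_mat const_mat_inject cmat_conj_def)
  with K W show "\<exists>K W. N \<le> K \<and> M \<le> K \<and> cmat_unitary K W \<and> A = cmat_conj K W B"
    by blast
next
  assume "\<exists>K W. N \<le> K \<and> M \<le> K \<and> cmat_unitary K W \<and> A = cmat_conj K W B"
  then obtain K W where "N \<le> K" "M \<le> K" "cmat_unitary K W" "A = cmat_conj K W B"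
    by blast
  then show "proj_equiv n \<Theta> (N, const_mat A) (M, const_mat B)"
    unfolding proj_equiv_def
    by (auto intro!: exI[of _ K] exI[of _ "const_mat W"]
        simp: is_unitary_const_mat_iff mat_mult_const_mat mat_star_const_mat cmat_conj_def)
qed

lemma proj_equiv_iff_trace:
  assumes "p \<in> projectors n \<Theta>" and "q \<in> projectors n \<Theta>"
  shows "proj_equiv n \<Theta> p q \<longleftrightarrow> proj_trace p = proj_trace q"
proof -
  obtain N A where p: "p = (N, const_mat A)" and A: "cmat_proj N A"
    using assms(1) by (rule projectorE)
  obtain M B where q: "q = (M, const_mat B)" and B: "cmat_proj M B"
    using assms(2) by (rule projectorE)
  show ?thesis
    using cmat_proj_unitarily_equiv_iff_trace[OF A B] by (simp add: p q proj_equiv_const_mat_iff)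
qed

lemma proj_sum_const_mat:
  "proj_sum (N, const_mat A) (M, const_mat B) = (N + M, const_mat (block_diag N M A B))"
  by (auto simp: proj_sum_def const_mat_def block_diag_def nc_zero_eq_const fun_eq_iff)

lemma proj_sum_projector:
  assumes "p \<in> projectors n \<Theta>" and "q \<in> projectors n \<Theta>"
  shows "proj_sum p q \<in> projectors n \<Theta>" and "proj_trace (proj_sum p q) = proj_trace p + proj_trace q"
proof -
  obtain N A where p: "p = (N, const_mat A)" and A: "cmat_proj N A"
    using assms(1) by (rule projectorE)
  obtain M B where q: "q = (M, const_mat B)" and B: "cmat_proj M B"
    using assms(2) by (rule projectorE)
  show "proj_sum p q \<in> projectors n \<Theta>"
    using cmat_proj_block_diag[OF A B] by (simp add: p q proj_sum_const_mat const_projector)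
  show "proj_trace (proj_sum p q) = proj_trace p + proj_trace q"
    by (simp add: p q proj_sum_const_mat block_diag_trace)
qed

lemma proj_zero_eq_const_mat: "proj_zero = (0, const_mat (cmat_id 0))"
  by (simp add: proj_zero_def const_mat_def cmat_id_def nc_zero_eq_const)

lemma proj_zero_projector: "proj_zero \<in> projectors n \<Theta>" and proj_trace_zero: "proj_trace proj_zero = 0"
  by (simp_all add: proj_zero_eq_const_mat const_projector cmat_proj_id cmat_trace_id)

lemma id_projector: "(r, const_mat (cmat_id r)) \<in> projectors n \<Theta>"
  by (simp add: const_projector cmat_proj_id)

section \<open>The group \<open>K\<^sub>0\<close>\<close>

(* Traces of projections are natural numbers (proj_trace_of_nat); the floor only moves the
   difference into int. *)
definition K0_index :: "(nat \<times> nc_mat) \<times> (nat \<times> nc_mat) \<Rightarrow> int" where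
  "K0_index x = \<lfloor>Re (proj_trace (fst x) - proj_trace (snd x))\<rfloor>"

lemma of_int_K0_index:
  assumes "a \<in> projectors n \<Theta>" and "b \<in> projectors n \<Theta>"
  shows "of_int (K0_index (a, b)) = proj_trace a - proj_trace b"
proof -
  obtain r where r: "proj_trace a = of_nat r"
    using assms(1) by (rule proj_trace_of_nat)
  obtain s where s: "proj_trace b = of_nat s"
    using assms(2) by (rule proj_trace_of_nat)
  have diff: "proj_trace a - proj_trace b = of_int (int r - int s)"
    by (simp add: r s)
  moreover have "K0_index (a, b) = int r - int s"
    unfolding K0_index_def fst_conv snd_conv diff using floor_of_int[of "int r - int s"] by simp
  ultimately show ?thesis
    by simp
qed

lemma K0_rel_iff:
  "(x, y) \<in> K0_rel n \<Theta> \<longleftrightarrow>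
     x \<in> projectors n \<Theta> \<times> projectors n \<Theta> \<and> y \<in> projectors n \<Theta> \<times> projectors n \<Theta> \<and>
     K0_index x = K0_index y"
proof -
  obtain a b where x: "x = (a, b)"
    by (cases x)
  obtain c d where y: "y = (c, d)"
    by (cases y)
  show ?thesis
  proof (cases "a \<in> projectors n \<Theta> \<and> b \<in> projectors n \<Theta> \<and> c \<in> projectors n \<Theta> \<and> d \<in> projectors n \<Theta>")
    case True
    then have P: "a \<in> projectors n \<Theta>" "b \<in> projectors n \<Theta>" "c \<in> projectors n \<Theta>" "d \<in> projectors n \<Theta>"
      by simp_all
    have ad: "proj_sum a d \<in> projectors n \<Theta>" and cb: "proj_sum c b \<in> projectors n \<Theta>"
      using P by (simp_all add: proj_sum_projector)
    have "proj_equiv n \<Theta> (proj_sum (proj_sum a d) e) (proj_sum (proj_sum c b) e) \<longleftrightarrow>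
        proj_trace a + proj_trace d = proj_trace c + proj_trace b" if e: "e \<in> projectors n \<Theta>" for e
      using proj_equiv_iff_trace[OF proj_sum_projector(1)[OF ad e] proj_sum_projector(1)[OF cb e]]
        proj_sum_projector(2)[OF ad e] proj_sum_projector(2)[OF cb e]
        proj_sum_projector(2)[OF P(1,4)] proj_sum_projector(2)[OF P(3,2)]
      by simp
    then have "(\<exists>e\<in>projectors n \<Theta>. proj_equiv n \<Theta> (proj_sum (proj_sum a d) e) (proj_sum (proj_sum c b) e))
        \<longleftrightarrow> proj_trace a + proj_trace d = proj_trace c + proj_trace b"
      using proj_zero_projector by blast
    also have "\<dots> \<longleftrightarrow> (of_int (K0_index (a, b)) :: complex) = of_int (K0_index (c, d))"
      using P by (simp add: of_int_K0_index algebra_simps)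
    finally show ?thesis
      using P by (simp add: x y K0_rel_def)
  qed (auto simp: x y K0_rel_def)
qed

definition K0_class :: "nat \<Rightarrow> (nat \<Rightarrow> nat \<Rightarrow> real) \<Rightarrow> int \<Rightarrow> ((nat \<times> nc_mat) \<times> (nat \<times> nc_mat)) set" where
  "K0_class n \<Theta> z = {x \<in> projectors n \<Theta> \<times> projectors n \<Theta>. K0_index x = z}"

lemma K0_rel_Image:
  assumes "x \<in> projectors n \<Theta> \<times> projectors n \<Theta>"
  shows "K0_rel n \<Theta> `` {x} = K0_class n \<Theta> (K0_index x)"
  using assms by (auto simp: K0_class_def K0_rel_iff)

lemma K0_class_nonempty: "K0_class n \<Theta> z \<noteq> {}"
proof -
  let ?p = "\<lambda>r. (r, const_mat (cmat_id r))"
  have "K0_index (?p r, proj_zero) = int r" and "K0_index (proj_zero, ?p r) = - int r" for r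
  proof -
    have "?p r \<in> projectors n \<Theta>" and "proj_zero \<in> projectors n \<Theta>"
      by (rule id_projector, rule proj_zero_projector)
    then have "of_int (K0_index (?p r, proj_zero)) = (of_int (int r) :: complex)"
      and "of_int (K0_index (proj_zero, ?p r)) = (of_int (- int r) :: complex)"
      by (simp_all add: of_int_K0_index cmat_trace_id proj_trace_zero)
    then show "K0_index (?p r, proj_zero) = int r" and "K0_index (proj_zero, ?p r) = - int r"
      by (simp_all only: of_int_eq_iff)
  qed
  then have "(?p (nat z), proj_zero) \<in> K0_class n \<Theta> z \<or> (proj_zero, ?p (nat (- z))) \<in> K0_class n \<Theta> z"
    by (cases "z \<ge> 0") (simp_all add: K0_class_def id_projector proj_zero_projector)
  then show ?thesis
    by blast
qed

lemma carrier_K0: "carrier (K0 n \<Theta>) = range (K0_class n \<Theta>)"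
proof -
  have "carrier (K0 n \<Theta>) = (\<Union>x\<in>projectors n \<Theta> \<times> projectors n \<Theta>. {K0_class n \<Theta> (K0_index x)})"
    unfolding K0_def quotient_def by (simp add: K0_rel_Image cong: SUP_cong)
  also have "\<dots> = range (K0_class n \<Theta>)"
  proof (intro equalityI subsetI)
    fix X
    assume "X \<in> range (K0_class n \<Theta>)"
    then obtain z where X: "X = K0_class n \<Theta> z"
      by blast
    obtain x where "x \<in> K0_class n \<Theta> z"
      using K0_class_nonempty by blast
    then show "X \<in> (\<Union>x\<in>projectors n \<Theta> \<times> projectors n \<Theta>. {K0_class n \<Theta> (K0_index x)})"
      unfolding X K0_class_def by blast
  qed blast
  finally show ?thesis .
qed

lemma inj_K0_class: "inj (K0_class n \<Theta>)"
proof (rule injI)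
  fix z w
  assume "K0_class n \<Theta> z = K0_class n \<Theta> w"
  moreover obtain x where "x \<in> K0_class n \<Theta> z"
    using K0_class_nonempty by blast
  ultimately show "z = w"
    by (auto simp: K0_class_def)
qed

lemma K0_index_proj_sum:
  assumes "a \<in> projectors n \<Theta>" "b \<in> projectors n \<Theta>" "c \<in> projectors n \<Theta>" "d \<in> projectors n \<Theta>"
  shows "K0_index (proj_sum a c, proj_sum b d) = K0_index (a, b) + K0_index (c, d)"
proof -
  have "(of_int (K0_index (proj_sum a c, proj_sum b d)) :: complex) =
      proj_trace (proj_sum a c) - proj_trace (proj_sum b d)"
    using assms by (intro of_int_K0_index[where n = n and \<Theta> = \<Theta>]) (simp_all add: proj_sum_projector)
  also have "\<dots> = (proj_trace a - proj_trace b) + (proj_trace c - proj_trace d)"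
    using assms by (simp add: proj_sum_projector)
  also have "\<dots> = of_int (K0_index (a, b) + K0_index (c, d))"
    using assms by (simp add: of_int_K0_index)
  finally show ?thesis
    by (simp only: of_int_eq_iff)
qed

lemma K0_class_mult: "K0_class n \<Theta> z \<otimes>\<^bsub>K0 n \<Theta>\<^esub> K0_class n \<Theta> w = K0_class n \<Theta> (z + w)"
proof -
  let ?S = "{(proj_sum a c, proj_sum b d) | a b c d. (a, b) \<in> K0_class n \<Theta> z \<and> (c, d) \<in> K0_class n \<Theta> w}"
  have S: "?S \<subseteq> K0_class n \<Theta> (z + w)"
    by (auto simp: K0_class_def proj_sum_projector K0_index_proj_sum)
  obtain x y where x: "x \<in> K0_class n \<Theta> z" and y: "y \<in> K0_class n \<Theta> w"
    using K0_class_nonempty by blast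
  then have "(proj_sum (fst x) (fst y), proj_sum (snd x) (snd y)) \<in> ?S"
    by (intro CollectI exI[of _ "fst x"] exI[of _ "snd x"] exI[of _ "fst y"] exI[of _ "snd y"]) simp
  then have "?S \<noteq> {}"
    by blast
  have rel_image: "K0_rel n \<Theta> `` {x} = K0_class n \<Theta> (z + w)" if "x \<in> ?S" for x
  proof -
    have "x \<in> K0_class n \<Theta> (z + w)"
      using S that by blast
    then show ?thesis
      by (simp add: K0_class_def K0_rel_Image)
  qed
  have "K0_rel n \<Theta> `` ?S = K0_class n \<Theta> (z + w)"
  proof
    show "K0_rel n \<Theta> `` ?S \<subseteq> K0_class n \<Theta> (z + w)"
      using rel_image by blast
    show "K0_class n \<Theta> (z + w) \<subseteq> K0_rel n \<Theta> `` ?S"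
      using rel_image \<open>?S \<noteq> {}\<close> by blast
  qed
  then show ?thesis
    by (simp add: K0_def)
qed

theorem theorem1p1:
  fixes n :: nat and \<Theta> :: "nat \<Rightarrow> nat \<Rightarrow> real"
  assumes "n \<ge> 1" and "admissible n \<Theta>"
  shows "K0 n \<Theta> \<cong> integer_group"
proof -
  have "K0_class n \<Theta> \<in> hom integer_group (K0 n \<Theta>)"
    by (simp add: hom_def carrier_K0 K0_class_mult)
  moreover have "bij_betw (K0_class n \<Theta>) (carrier integer_group) (carrier (K0 n \<Theta>))"
    by (simp add: bij_betw_def inj_K0_class carrier_K0)
  ultimately have "integer_group \<cong> K0 n \<Theta>"
    by (auto simp: is_iso_def iso_def)
  then show ?thesis
    by (rule group.iso_sym[OF group_integer_group])
qed

end
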